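(* Let $\mathbb{K}$ be a field of characteristic zero and let $\mathbb{D}=\{\nabla^{a(1)}_{i(1)},\ldots,\nabla^{a(m)}_{i(m)}\}$ be a finite set of homogeneous locally nilpotent derivations of $\mathbb{K}[x_1,\ldots,x_n]$ (defined below). Let $\mathbb{D}'\subseteq\mathbb{D}$ be the set of those derivations whose vertices in the graph $\Gamma(\mathbb{D})$ lie on some oriented cycle, and $\mathbb{D}''=\mathbb{D}\setminus\mathbb{D}'$. Assume that all derivations in $\mathbb{D}'$ have weight zero. Let $D_1\in\mathbb{D}'$, $D_2\in\mathbb{D}''$ and $D:=[D_1,D_2]$. Then either $D=0$, or $D$ is (a nonzero scalar multiple of) a derivation of the form $\nabla^b_j$ and the vertex corresponding to $D$ in the graph $\Gamma(\mathbb{D}\cup\{D\})$ is not contained in any oriented cycle.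
   Context: $\partial_i=\partial/\partial x_i$. For $1\le i\le n$ and $a\in\mathbb{Z}^n_{\ge0}$ with $a_i=0$, $\nabla^a_i:=x_1^{a_1}\cdots x_{i-1}^{a_{i-1}}x_{i+1}^{a_{i+1}}\cdots x_n^{a_n}\partial_i$; its weight is $\sum_ja_j-1$ (so weight zero derivations are $x_j\partial_i$ with $j\neq i$). For a finite set $\mathbb{D}=\{\nabla^{a(1)}_{i(1)},\ldots,\nabla^{a(m)}_{i(m)}\}$, the directed graph $\Gamma(\mathbb{D})$ has vertices $1,\ldots,m$ (vertex $s$ corresponding to $\nabla^{a(s)}_{i(s)}$), and $(s,j)$ is an edge if and only if the $i(s)$-th coordinate of $a(j)$ is positive. $[D_1,D_2]=D_1\circ D_2-D_2\circ D_1$. *)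

theory Defs
  imports "HOL-Library.Poly_Mapping"
begin

type_synonym 'a mpoly = "(nat \<Rightarrow>\<^sub>0 nat) \<Rightarrow>\<^sub>0 'a"

definition in_vars :: "nat \<Rightarrow> ('a::zero) mpoly \<Rightarrow> bool" where
  "in_vars n p \<longleftrightarrow> (\<forall>m::nat \<Rightarrow>\<^sub>0 nat. m \<in> Poly_Mapping.keys p \<longrightarrow> Poly_Mapping.keys m \<subseteq> {1..n})"

definition mpd :: "nat \<Rightarrow> ('a::comm_ring_1) mpoly \<Rightarrow> 'a mpoly" where
  "mpd i p = (\<Sum>m\<in>Poly_Mapping.keys p. if Poly_Mapping.lookup m i > 0
       then Poly_Mapping.single (m - Poly_Mapping.single i 1) (of_nat (Poly_Mapping.lookup m i) * Poly_Mapping.lookup p m)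
       else 0)"

text \<open>A derivation nabla^a_i is encoded by the pair (a, i).\<close>
definition nabla :: "(nat \<Rightarrow>\<^sub>0 nat) \<times> nat \<Rightarrow> ('a::comm_ring_1) mpoly \<Rightarrow> 'a mpoly" where
  "nabla d p = Poly_Mapping.single (fst d) 1 * mpd (snd d) p"

definition valid_nabla :: "nat \<Rightarrow> (nat \<Rightarrow>\<^sub>0 nat) \<times> nat \<Rightarrow> bool" where
  "valid_nabla n d \<longleftrightarrow> snd d \<in> {1..n} \<and> Poly_Mapping.keys (fst d) \<subseteq> {1..n} \<and> Poly_Mapping.lookup (fst d) (snd d) = 0"

definition weight :: "(nat \<Rightarrow>\<^sub>0 nat) \<times> nat \<Rightarrow> int" where
  "weight d = int (\<Sum>j\<in>Poly_Mapping.keys (fst d). Poly_Mapping.lookup (fst d) j) - 1"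

definition gamma_edges :: "((nat \<Rightarrow>\<^sub>0 nat) \<times> nat) set \<Rightarrow> (((nat \<Rightarrow>\<^sub>0 nat) \<times> nat) \<times> ((nat \<Rightarrow>\<^sub>0 nat) \<times> nat)) set" where
  "gamma_edges DD = {(s, t). s \<in> DD \<and> t \<in> DD \<and> Poly_Mapping.lookup (fst t) (snd s) > 0}"

definition on_cycle :: "((nat \<Rightarrow>\<^sub>0 nat) \<times> nat) set \<Rightarrow> (nat \<Rightarrow>\<^sub>0 nat) \<times> nat \<Rightarrow> bool" where
  "on_cycle DD s \<longleftrightarrow> (s, s) \<in> (gamma_edges DD)\<^sup>+"

definition commutator :: "('b \<Rightarrow> 'b::ab_group_add) \<Rightarrow> ('b \<Rightarrow> 'b) \<Rightarrow> 'b \<Rightarrow> 'b" where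
  "commutator D1 D2 p = D1 (D2 p) - D2 (D1 p)"

end

theory Submission
  imports Defs HOL.Modules
begin

text \<open>
  A derivation on a cycle has weight zero, so \<open>D\<^sub>1 = x\<^sub>k \<partial>\<^sub>i\<close> with \<open>k \<noteq> i\<close>;
  write \<open>D\<^sub>2 = x\<^sup>b \<partial>\<^sub>j\<close> and \<open>B = b - e\<^sub>i + e\<^sub>k\<close>. On monomials one computes
  \<open>[D\<^sub>1, D\<^sub>2] = b\<^sub>i x\<^sup>B \<partial>\<^sub>j - \<delta>\<^sub>k\<^sub>j x\<^sup>b \<partial>\<^sub>i\<close>.
  If \<open>k = j\<close>, the edge \<open>D\<^sub>2 \<rightarrow> D\<^sub>1\<close> forces \<open>b\<^sub>i = 0\<close>, since otherwise \<open>D\<^sub>2\<close> would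
  lie on a cycle; hence \<open>D = -x\<^sup>b \<partial>\<^sub>i\<close>. If \<open>k \<noteq> j\<close>, then \<open>D = b\<^sub>i x\<^sup>B \<partial>\<^sub>j\<close>.
  In both cases every in-neighbour of the new vertex reaches \<open>D\<^sub>2\<close> and every
  out-neighbour of it is reached from \<open>D\<^sub>2\<close> in the old graph, so relabelling the new
  vertex as \<open>D\<^sub>2\<close> turns a cycle through it into a cycle through \<open>D\<^sub>2\<close>.
\<close>

lemma poly_mapping_sum_single:
  "(\<Sum>k\<in>Poly_Mapping.keys p. Poly_Mapping.single k (Poly_Mapping.lookup p k)) = p"
proof (rule poly_mapping_eqI)
  fix k
  show "Poly_Mapping.lookup (\<Sum>m\<in>Poly_Mapping.keys p. Poly_Mapping.single m (Poly_Mapping.lookup p m)) k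
      = Poly_Mapping.lookup p k"
    by (cases "k \<in> Poly_Mapping.keys p") (auto simp: lookup_sum lookup_single when_def in_keys_iff)
qed

lemma additive_poly_mapping_eqI:
  fixes f g :: "('b \<Rightarrow>\<^sub>0 'c::ab_group_add) \<Rightarrow> 'd::ab_group_add"
  assumes "additive f" "additive g"
    and "\<And>k c. f (Poly_Mapping.single k c) = g (Poly_Mapping.single k c)"
  shows "f p = g p"
  using assms by (metis (no_types, lifting) additive.sum poly_mapping_sum_single sum.cong)

lemma additive_compose: "additive f \<Longrightarrow> additive g \<Longrightarrow> additive (\<lambda>x. f (g x))"
  by unfold_locales (simp add: additive.add)

lemma additive_uminus: "additive (uminus :: 'a::ab_group_add \<Rightarrow> 'a)"
  by unfold_locales simp

lemma additive_commutator: "additive f \<Longrightarrow> additive g \<Longrightarrow> additive (commutator f g)"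
  by unfold_locales (simp add: commutator_def additive.add)

lemma additive_scale_mpoly:
  "additive (Poly_Mapping.map (\<lambda>x. (c::'a::comm_ring_1) * x) :: 'a mpoly \<Rightarrow> 'a mpoly)"
  by unfold_locales (simp add: mult_map_scale_conv_mult distrib_left)

definition mpd_monomial :: "nat \<Rightarrow> (nat \<Rightarrow>\<^sub>0 nat) \<Rightarrow> 'a::comm_ring_1 \<Rightarrow> 'a mpoly" where
  "mpd_monomial i m c = (if Poly_Mapping.lookup m i > 0
     then Poly_Mapping.single (m - Poly_Mapping.single i 1) (of_nat (Poly_Mapping.lookup m i) * c)
     else 0)"

lemma mpd_monomial_add: "mpd_monomial i m (c + c') = mpd_monomial i m c + mpd_monomial i m c'"
  by (simp add: mpd_monomial_def distrib_left single_add)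

lemma mpd_eq_sum_superset:
  "finite S \<Longrightarrow> Poly_Mapping.keys p \<subseteq> S \<Longrightarrow>
   mpd i p = (\<Sum>m\<in>S. mpd_monomial i m (Poly_Mapping.lookup p m))"
  unfolding mpd_def mpd_monomial_def by (rule sum.mono_neutral_left) (auto simp: in_keys_iff)

lemma mpd_single: "mpd i (Poly_Mapping.single m c) = mpd_monomial i m c"
  by (simp add: mpd_eq_sum_superset[of "{m}"])

lemma additive_mpd: "additive (mpd i :: 'a::comm_ring_1 mpoly \<Rightarrow> 'a mpoly)"
proof
  fix p q :: "'a mpoly"
  let ?S = "Poly_Mapping.keys p \<union> Poly_Mapping.keys q"
  have "mpd i (p + q) = (\<Sum>m\<in>?S. mpd_monomial i m (Poly_Mapping.lookup (p + q) m))"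
    using keys_add[of p q] by (intro mpd_eq_sum_superset) auto
  also have "\<dots> = (\<Sum>m\<in>?S. mpd_monomial i m (Poly_Mapping.lookup p m)
                          + mpd_monomial i m (Poly_Mapping.lookup q m))"
    by (simp add: lookup_add mpd_monomial_add)
  also have "\<dots> = mpd i p + mpd i q"
    by (simp add: sum.distrib mpd_eq_sum_superset[of ?S p] mpd_eq_sum_superset[of ?S q])
  finally show "mpd i (p + q) = mpd i p + mpd i q" .
qed

lemma additive_nabla: "additive (nabla d :: 'a::comm_ring_1 mpoly \<Rightarrow> 'a mpoly)"
  by unfold_locales (simp add: nabla_def additive.add[OF additive_mpd] distrib_left)

lemma nabla_zero: "nabla d 0 = (0::'a::comm_ring_1 mpoly)"
  by (rule additive.zero[OF additive_nabla])

lemma nabla_single: "nabla (a, i) (Poly_Mapping.single m c) =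
   (if Poly_Mapping.lookup m i > 0
    then Poly_Mapping.single (a + (m - Poly_Mapping.single i 1)) (of_nat (Poly_Mapping.lookup m i) * c)
    else 0)"
  by (simp add: nabla_def mpd_single mpd_monomial_def mult_single)

lemma single_diff_single_eqI:
  "k = k'' \<Longrightarrow> k' = k'' \<Longrightarrow> c - c' = c'' \<Longrightarrow>
   Poly_Mapping.single k c - Poly_Mapping.single k' c' = Poly_Mapping.single k'' (c''::'a::ab_group_add)"
  by (simp add: single_diff[symmetric])

lemma commutator_linear_nabla_single:
  assumes "k \<noteq> i" "k \<noteq> j" "Poly_Mapping.lookup b j = 0"
  shows "commutator (nabla (Poly_Mapping.single k 1, i)) (nabla (b, j)) (Poly_Mapping.single m c) =
     Poly_Mapping.map (\<lambda>x. of_nat (Poly_Mapping.lookup b i) * x)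
       (nabla (b - Poly_Mapping.single i 1 + Poly_Mapping.single k 1, j)
          (Poly_Mapping.single m (c::'a::comm_ring_1)))"
proof (cases "Poly_Mapping.lookup b i = 0")
  case True
  with assms have "commutator (nabla (Poly_Mapping.single k 1, i)) (nabla (b, j)) (Poly_Mapping.single m c) = 0"
    apply (simp add: commutator_def nabla_single nabla_zero lookup_add lookup_minus lookup_single when_def)
    apply (intro conjI impI; rule arg_cong2[where f=Poly_Mapping.single]; (rule poly_mapping_eqI)?)
    apply (auto simp: lookup_add lookup_minus lookup_single when_def algebra_simps)
    done
  with True show ?thesis
    by (simp add: map_eq_zero_iff)
next
  case False
  with assms have "0 < Poly_Mapping.lookup b i" "i \<noteq> j" by auto
  with assms show ?thesis
    apply (simp add: commutator_def nabla_single nabla_zero map_eq_zero_iff lookup_add lookup_minus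
        lookup_single when_def single_uminus[symmetric])
    apply (intro conjI impI; (rule single_diff_single_eqI | rule arg_cong2[where f=Poly_Mapping.single]);
        (rule poly_mapping_eqI)?)
    apply (auto simp: lookup_add lookup_minus lookup_single when_def algebra_simps)
    done
qed

lemma commutator_linear_nabla_single_swap:
  assumes "i \<noteq> j" "Poly_Mapping.lookup b i = 0" "Poly_Mapping.lookup b j = 0"
  shows "commutator (nabla (Poly_Mapping.single j 1, i)) (nabla (b, j)) (Poly_Mapping.single m c) =
     - nabla (b, i) (Poly_Mapping.single m (c::'a::comm_ring_1))"
  using assms
  apply (simp add: commutator_def nabla_single nabla_zero lookup_add lookup_minus lookup_single when_def
      single_uminus[symmetric])
  apply (intro conjI impI; (rule single_diff_single_eqI | rule arg_cong2[where f=Poly_Mapping.single]);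
      (rule poly_mapping_eqI)?)
  apply (auto simp: lookup_add lookup_minus lookup_single when_def algebra_simps)
  done

lemma commutator_linear_nabla:
  assumes "k \<noteq> i" "k \<noteq> j" "Poly_Mapping.lookup b j = 0"
  shows "commutator (nabla (Poly_Mapping.single k 1, i)) (nabla (b, j)) p =
     Poly_Mapping.map (\<lambda>x. of_nat (Poly_Mapping.lookup b i) * x)
       (nabla (b - Poly_Mapping.single i 1 + Poly_Mapping.single k 1, j) (p::'a::comm_ring_1 mpoly))"
  by (rule additive_poly_mapping_eqI[OF additive_commutator[OF additive_nabla additive_nabla]
        additive_compose[OF additive_scale_mpoly additive_nabla]])
     (rule commutator_linear_nabla_single[OF assms])

lemma commutator_linear_nabla_swap:
  assumes "i \<noteq> j" "Poly_Mapping.lookup b i = 0" "Poly_Mapping.lookup b j = 0"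
  shows "commutator (nabla (Poly_Mapping.single j 1, i)) (nabla (b, j)) p =
     - nabla (b, i) (p::'a::comm_ring_1 mpoly)"
  by (rule additive_poly_mapping_eqI[OF additive_commutator[OF additive_nabla additive_nabla]
        additive_compose[OF additive_uminus additive_nabla]])
     (rule commutator_linear_nabla_single_swap[OF assms])

lemma weight_eq_0_imp_linear:
  assumes "weight (a, i) = 0"
  obtains k where "a = Poly_Mapping.single k 1"
proof -
  have "(\<Sum>j\<in>Poly_Mapping.keys a. Poly_Mapping.lookup a j) = 1"
    using assms unfolding weight_def by (simp del: of_nat_sum)
  then obtain k where "Poly_Mapping.lookup a k = 1"
    and "\<forall>j\<in>Poly_Mapping.keys a. j \<noteq> k \<longrightarrow> Poly_Mapping.lookup a j = 0"
    by (metis finite_keys sum_eq_1_iff)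
  then have "a = Poly_Mapping.single k 1"
    by (intro poly_mapping_eqI) (auto simp: lookup_single when_def in_keys_iff)
  then show ?thesis by (rule that)
qed

lemma valid_nabla_linear_iff:
  "valid_nabla n (Poly_Mapping.single k 1, i) \<longleftrightarrow> i \<in> {1..n} \<and> k \<in> {1..n} \<and> k \<noteq> i"
  by (auto simp: valid_nabla_def lookup_single when_def)

lemma valid_nabla_exponent_shift:
  assumes "valid_nabla n (b, j)" "k \<in> {1..n}" "k \<noteq> j" "i \<noteq> j"
  shows "valid_nabla n (b - Poly_Mapping.single i 1 + Poly_Mapping.single k 1, j)"
proof -
  have "Poly_Mapping.keys (b - Poly_Mapping.single i 1 + Poly_Mapping.single k 1)
      \<subseteq> insert k (Poly_Mapping.keys b)"
    by (auto simp: in_keys_iff lookup_add lookup_minus lookup_single when_def split: if_splits)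
  with assms show ?thesis
    by (auto simp: valid_nabla_def lookup_add lookup_minus lookup_single when_def)
qed

lemma trancl_map_trancl:
  assumes "\<And>x y. (x, y) \<in> r \<Longrightarrow> (f x, f y) \<in> s\<^sup>+" and "(x, y) \<in> r\<^sup>+"
  shows "(f x, f y) \<in> s\<^sup>+"
  using assms(2) by induction (use assms(1) in \<open>auto intro: trancl_trans\<close>)

lemma mem_gamma_edges_iff:
  "(s, t) \<in> gamma_edges DD \<longleftrightarrow> s \<in> DD \<and> t \<in> DD \<and> Poly_Mapping.lookup (fst t) (snd s) > 0"
  by (simp add: gamma_edges_def)

lemma not_on_cycle_insert:
  assumes "\<not> on_cycle DD d"
    and into: "\<And>s. s \<in> DD \<Longrightarrow> Poly_Mapping.lookup (fst x) (snd s) > 0 \<Longrightarrow> (s, d) \<in> (gamma_edges DD)\<^sup>+"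
    and out: "\<And>t. t \<in> DD \<Longrightarrow> Poly_Mapping.lookup (fst t) (snd x) > 0 \<Longrightarrow> (d, t) \<in> (gamma_edges DD)\<^sup>+"
    and "Poly_Mapping.lookup (fst x) (snd x) = 0"
  shows "\<not> on_cycle (insert x DD) x"
proof
  let ?f = "id(x := d)"
  assume "on_cycle (insert x DD) x"
  then have "(?f x, ?f x) \<in> (gamma_edges DD)\<^sup>+"
    unfolding on_cycle_def
  proof (rule trancl_map_trancl[where f = ?f, rotated])
    fix s t assume st: "(s, t) \<in> gamma_edges (insert x DD)"
    show "(?f s, ?f t) \<in> (gamma_edges DD)\<^sup>+"
    proof (cases "s = x \<or> t = x")
      case True
      with st assms(4) show ?thesis by (auto simp: mem_gamma_edges_iff intro: into out)
    next
      case False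
      with st have "(s, t) \<in> gamma_edges DD" by (simp add: mem_gamma_edges_iff)
      with False show ?thesis by auto
    qed
  qed
  with assms(1) show False by (simp add: on_cycle_def)
qed

lemma not_on_cycle_insert_target_swap:
  assumes d1: "(Poly_Mapping.single j 1, i) \<in> DD" and d2: "(b, j) \<in> DD"
    and not_cyclic: "\<not> on_cycle DD (b, j)"
  shows "Poly_Mapping.lookup b i = 0" and "\<not> on_cycle (insert (b, i) DD) (b, i)"
proof -
  have back_edge: "((b, j), (Poly_Mapping.single j 1, i)) \<in> gamma_edges DD"
    using d1 d2 by (simp add: mem_gamma_edges_iff)
  show bi: "Poly_Mapping.lookup b i = 0"
  proof (rule ccontr)
    assume "Poly_Mapping.lookup b i \<noteq> 0"
    with d1 d2 have "((Poly_Mapping.single j 1, i), (b, j)) \<in> gamma_edges DD"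
      by (simp add: mem_gamma_edges_iff)
    with back_edge have "on_cycle DD (b, j)"
      unfolding on_cycle_def by (meson r_into_trancl trancl_into_trancl)
    with not_cyclic show False ..
  qed
  show "\<not> on_cycle (insert (b, i) DD) (b, i)"
  proof (rule not_on_cycle_insert[OF not_cyclic])
    fix s assume "s \<in> DD" "0 < Poly_Mapping.lookup (fst (b, i)) (snd s)"
    with d2 have "(s, (b, j)) \<in> gamma_edges DD"
      by (simp add: mem_gamma_edges_iff)
    then show "(s, (b, j)) \<in> (gamma_edges DD)\<^sup>+" ..
  next
    fix t assume "t \<in> DD" "0 < Poly_Mapping.lookup (fst t) (snd (b, i))"
    with d1 have "((Poly_Mapping.single j 1, i), t) \<in> gamma_edges DD"
      by (simp add: mem_gamma_edges_iff)
    with back_edge show "((b, j), t) \<in> (gamma_edges DD)\<^sup>+"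
      by (meson r_into_trancl trancl_into_trancl)
  next
    show "Poly_Mapping.lookup (fst (b, i)) (snd (b, i)) = 0"
      using bi by simp
  qed
qed

lemma not_on_cycle_insert_exponent_shift:
  assumes d1: "(Poly_Mapping.single k 1, i) \<in> DD" and d2: "(b, j) \<in> DD"
    and not_cyclic: "\<not> on_cycle DD (b, j)"
    and "k \<noteq> j" "0 < Poly_Mapping.lookup b i" "Poly_Mapping.lookup b j = 0"
  defines "B \<equiv> b - Poly_Mapping.single i 1 + Poly_Mapping.single k 1"
  shows "\<not> on_cycle (insert (B, j) DD) (B, j)"
proof -
  have lookup_B: "Poly_Mapping.lookup B y =
      Poly_Mapping.lookup b y - (if i = y then 1 else 0) + (if k = y then 1 else 0)" for y
    by (simp add: B_def lookup_add lookup_minus lookup_single when_def)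
  have forward_edge: "((Poly_Mapping.single k 1, i), (b, j)) \<in> gamma_edges DD"
    using d1 d2 assms(5) by (simp add: mem_gamma_edges_iff)
  show ?thesis
  proof (rule not_on_cycle_insert[OF not_cyclic])
    fix s assume s: "s \<in> DD" "0 < Poly_Mapping.lookup (fst (B, j)) (snd s)"
    show "(s, (b, j)) \<in> (gamma_edges DD)\<^sup>+"
    proof (cases "snd s = k")
      case True
      with s d1 have "(s, (Poly_Mapping.single k 1, i)) \<in> gamma_edges DD"
        by (simp add: mem_gamma_edges_iff)
      with forward_edge show ?thesis by (meson r_into_trancl trancl_into_trancl)
    next
      case False
      with s have "0 < Poly_Mapping.lookup b (snd s)"
        using lookup_B[of "snd s"] by (simp split: if_splits)
      with s d2 have "(s, (b, j)) \<in> gamma_edges DD"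
        by (simp add: mem_gamma_edges_iff)
      then show ?thesis ..
    qed
  next
    fix t assume "t \<in> DD" "0 < Poly_Mapping.lookup (fst t) (snd (B, j))"
    with d2 have "((b, j), t) \<in> gamma_edges DD"
      by (simp add: mem_gamma_edges_iff)
    then show "((b, j), t) \<in> (gamma_edges DD)\<^sup>+" ..
  next
    show "Poly_Mapping.lookup (fst (B, j)) (snd (B, j)) = 0"
      using assms(4-6) lookup_B[of j] by auto
  qed
qed

theorem lemma2:
  fixes n :: nat
    and DD :: "((nat \<Rightarrow>\<^sub>0 nat) \<times> nat) set"
    and d1 d2 :: "(nat \<Rightarrow>\<^sub>0 nat) \<times> nat"
  assumes "finite DD"
    and "\<forall>d\<in>DD. valid_nabla n d"
    and "\<forall>d\<in>DD. on_cycle DD d \<longrightarrow> weight d = 0"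
    and "d1 \<in> DD" and "on_cycle DD d1"
    and "d2 \<in> DD" and "\<not> on_cycle DD d2"
  shows "(\<forall>p :: ('a::field_char_0) mpoly. in_vars n p \<longrightarrow> commutator (nabla d1) (nabla d2) p = 0)
     \<or> (\<exists>(c::'a) b j. c \<noteq> 0 \<and> valid_nabla n (b, j)
          \<and> (\<forall>p :: 'a mpoly. in_vars n p \<longrightarrow>
                commutator (nabla d1) (nabla d2) p = Poly_Mapping.map (\<lambda>x. c * x) (nabla (b, j) p))
          \<and> \<not> on_cycle (insert (b, j) DD) (b, j))"
proof -
  \<comment> \<open>The identities below hold for all polynomials.\<close>
  obtain a i b j where d1: "d1 = (a, i)" and d2: "d2 = (b, j)" by (cases d1, cases d2)
  have "weight (a, i) = 0"
    using assms(3-5) d1 by blast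
  then obtain k where a: "a = Poly_Mapping.single k 1"
    by (rule weight_eq_0_imp_linear)
  have valid1: "valid_nabla n (Poly_Mapping.single k 1, i)" and valid2: "valid_nabla n (b, j)"
    using assms(2,4,6) a d1 d2 by blast+
  from valid1 have ki: "k \<noteq> i" and k: "k \<in> {1..n}"
    unfolding valid_nabla_linear_iff by simp_all
  from valid2 have bj: "Poly_Mapping.lookup b j = 0"
    by (simp add: valid_nabla_def)
  note graph = assms(4,6,7)[unfolded d1 d2 a]
  show ?thesis
  proof (cases "k = j")
    case True
    with ki have ij: "i \<noteq> j" by simp
    from graph have bi: "Poly_Mapping.lookup b i = 0"
      and not_cyclic: "\<not> on_cycle (insert (b, i) DD) (b, i)"
      unfolding True by (rule not_on_cycle_insert_target_swap)+
    have "commutator (nabla d1) (nabla d2) p = Poly_Mapping.map (\<lambda>x. (-1) * x) (nabla (b, i) p)"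
      for p :: "'a mpoly"
      unfolding d1 d2 a True commutator_linear_nabla_swap[OF ij bi bj]
      by (rule poly_mapping_eqI) (simp add: map.rep_eq when_def)
    moreover have "valid_nabla n (b, i)"
      using valid1 valid2 bi by (simp add: valid_nabla_def)
    moreover have "(-1::'a) \<noteq> 0" by simp
    ultimately show ?thesis
      using not_cyclic by blast
  next
    case False
    let ?B = "b - Poly_Mapping.single i 1 + Poly_Mapping.single k 1"
    have comm: "commutator (nabla d1) (nabla d2) p =
        Poly_Mapping.map (\<lambda>x. of_nat (Poly_Mapping.lookup b i) * x) (nabla (?B, j) p)"
      for p :: "'a mpoly"
      unfolding d1 d2 a by (rule commutator_linear_nabla[OF ki False bj])
    show ?thesis
    proof (cases "Poly_Mapping.lookup b i = 0")
      case True
      then show ?thesis using comm by (simp add: map_eq_zero_iff)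
    next
      case bi: False
      then have "(of_nat (Poly_Mapping.lookup b i) :: 'a) \<noteq> 0" by simp
      moreover from bj bi have "valid_nabla n (?B, j)"
        by (intro valid_nabla_exponent_shift[OF valid2 k False]) auto
      moreover from graph False bi bj have "\<not> on_cycle (insert (?B, j) DD) (?B, j)"
        by (intro not_on_cycle_insert_exponent_shift) auto
      ultimately show ?thesis
        using comm by blast
    qed
  qed
qed

end
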